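(* (a) Let $G$ be a finite abelian group of order coprime to $p$ and $\bar a=(a_1,\ldots,a_t)\in(\mathcal F(G,K))^t$. Then the space $\ker(\Delta_{\bar a})=\{f\in\mathcal F(G,K): f*a_j=0\ \forall j\}$ is spanned over $K$ by the translates of the traces $\mathrm{Tr}(g^\vee)$ of the $\bar a$-harmonic characters $g^\vee\in G^\vee$. (b) Let $\Lambda$ be a lattice, $\Lambda'\subseteq\Lambda$ a sublattice of finite index coprime to $p$, and $\bar a=(a_1,\ldots,a_t)\in(\mathcal F^0(\Lambda,K))^t$. Then the kernel of $\Delta_{\bar a}$ restricted to $\mathcal F_{\Lambda'}(\Lambda,K)$ is spanned over $K$ by the translates of the traces of the $\bar a$-harmonic characters $g^\vee\in\mathrm{Char}(\Lambda,\bar K^\times)$ with $\Lambda'\subseteq\ker(g^\vee)$.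
   Context: $K=\mathrm{GF}(q)$ with $q=p^r$, $\bar K$ an algebraic closure. For an abelian group $G$, $\mathcal F(G,F)$ and $\mathcal F^0(G,F)$ denote all, resp. finitely supported, functions $G\to F$; $(f*a)(g)=\sum_hf(h)a(g-h)$, $\Delta_af=f*a$, and $\ker\Delta_{\bar a}=\bigcap_j\ker\Delta_{a_j}$. Characters are homomorphisms $G\to\bar K^\times$ ($G^\vee$ for finite $G$, $\mathrm{Char}(\Lambda,\bar K^\times)$ for a lattice $\Lambda$); a character $g^\vee$ is $\bar a$-harmonic if $g^\vee*a_j=0$ for all $j$. For a function $f$ with finitely many values in $\bar K$, let $\mathrm{GF}(q^{r(f)})$ be the smallest subfield of $\bar K$ containing $K$ and all values of $f$, and $\mathrm{Tr}(f)=f+f^q+\cdots+f^{q^{r(f)-1}}$ (powers taken pointwise); it is $K$-valued. Translates of $h$ are the functions $x\mapsto h(x+g)$. $\mathcal F_{\Lambda'}(\Lambda,K)$ is the space of $K$-valued functions on $\Lambda$ invariant under translation by $\Lambda'$. *)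

theory Defs
  imports "HOL-Algebra.Algebraic_Closure_Type" "HOL-Library.Function_Algebras"
          "HOL-Library.Groups_Big_Fun" "HOL-Library.Cardinality"
begin

text \<open>Convolution (f * a)(g) = sum over h of f h * a (g - h); the sum ranges over all h
  (Sum_any: sum of the finitely many nonzero terms).  Used for finite G and for
  finitely supported a on a lattice.\<close>
definition conv :: "('g::ab_group_add \<Rightarrow> 'r::comm_ring_1) \<Rightarrow> ('g \<Rightarrow> 'r) \<Rightarrow> 'g \<Rightarrow> 'r" where
  "conv f a = (\<lambda>g. Sum_any (\<lambda>h. f h * a (g - h)))"

definition is_char :: "('g::ab_group_add \<Rightarrow> 'l::field) \<Rightarrow> bool" where
  "is_char \<chi> \<longleftrightarrow> (\<forall>x. \<chi> x \<noteq> 0) \<and> (\<forall>x y. \<chi> (x + y) = \<chi> x * \<chi> y)"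

definition harmonic :: "nat \<Rightarrow> (nat \<Rightarrow> 'g::ab_group_add \<Rightarrow> 'k::field) \<Rightarrow> ('g \<Rightarrow> 'k alg_closure) \<Rightarrow> bool" where
  "harmonic t a \<chi> \<longleftrightarrow> (\<forall>j<t. conv \<chi> (to_ac \<circ> a j) = (\<lambda>_. 0))"

definition is_subfield :: "'l::field set \<Rightarrow> bool" where
  "is_subfield F \<longleftrightarrow> 0 \<in> F \<and> 1 \<in> F \<and> (\<forall>x\<in>F. \<forall>y\<in>F. x + y \<in> F \<and> x * y \<in> F)
     \<and> (\<forall>x\<in>F. - x \<in> F \<and> inverse x \<in> F)"

definition gen_field :: "('g \<Rightarrow> 'k::field alg_closure) \<Rightarrow> 'k alg_closure set" where
  "gen_field f = \<Inter>{F. is_subfield F \<and> range to_ac \<subseteq> F \<and> range f \<subseteq> F}"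

definition deg_r :: "('g \<Rightarrow> 'k::{field,finite} alg_closure) \<Rightarrow> nat" where
  "deg_r f = (THE r. card (gen_field f) = CARD('k) ^ r)"

definition Tr :: "('g \<Rightarrow> 'k::{field,finite} alg_closure) \<Rightarrow> 'g \<Rightarrow> 'k alg_closure" where
  "Tr f = (\<lambda>x. \<Sum>i<deg_r f. f x ^ (CARD('k) ^ i))"

text \<open>Tr(f) is K-valued; TrK f is that function viewed as a function into K.\<close>
definition TrK :: "('g \<Rightarrow> 'k::{field,finite} alg_closure) \<Rightarrow> 'g \<Rightarrow> 'k" where
  "TrK f = (\<lambda>x. of_ac (Tr f x))"

definition translate :: "('g::ab_group_add \<Rightarrow> 'b) \<Rightarrow> 'g \<Rightarrow> 'g \<Rightarrow> 'b" where
  "translate h g = (\<lambda>x. h (x + g))"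

abbreviation fspan :: "('g \<Rightarrow> 'k::field) set \<Rightarrow> ('g \<Rightarrow> 'k) set" where
  "fspan S \<equiv> Modules.module.span (\<lambda>c f x. c * f x) S"

definition add_subgroup :: "'g::ab_group_add set \<Rightarrow> bool" where
  "add_subgroup H \<longleftrightarrow> 0 \<in> H \<and> (\<forall>x\<in>H. \<forall>y\<in>H. x + y \<in> H) \<and> (\<forall>x\<in>H. - x \<in> H)"

definition subgroup_index :: "'g::ab_group_add set \<Rightarrow> nat" where
  "subgroup_index H = card ((\<lambda>x. (+) x ` H) ` UNIV)"

end

theory Submission
  imports Defs "HOL-Computational_Algebra.Computational_Algebra"
begin

text \<open>Let \<open>L\<close> be a subgroup of finite index \<open>n\<close> prime to \<open>p\<close> (for part (a), \<open>L = 0\<close> in the finite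
  group \<open>G\<close>). Characters trivial on \<open>L\<close> take values in the \<open>n\<close>-th roots of unity; extending partial
  characters by extracting roots in the algebraic closure shows that they separate the cosets of
  \<open>L\<close>, so there are \<open>n\<close> of them and Fourier inversion holds for \<open>L\<close>-periodic functions. Convolution
  is diagonal in this basis: the Fourier coefficient of \<open>f * a\<close> at \<open>\<chi>\<close> is the product of those of
  \<open>f\<close> and \<open>a\<close>, and the latter vanishes exactly when \<open>\<chi>\<close> is \<open>a\<close>-harmonic. So a periodic \<open>f\<close> in
  the kernel is a combination of translates of harmonic characters. The Frobenius \<open>\<chi> \<mapsto> \<chi>\<^sup>q\<close>
  permutes the harmonic characters, and the sum over the orbit of \<open>\<chi>\<close> is \<open>Tr \<chi>\<close>, because the
  orbit length is the degree over \<open>K\<close> of the field generated by the values of \<open>\<chi>\<close>. Since \<open>f\<close> is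
  \<open>K\<close>-valued, grouping its expansion by orbits writes it as a \<open>K\<close>-combination of translates of
  traces. Conversely these translates lie in the kernel because harmonicity is invariant under
  Frobenius.\<close>

section \<open>Finite fields and the Frobenius map\<close>

lemma subfield_power_card_eq_self:
  fixes F :: "'a::field set"
  assumes "finite F" "is_subfield F" "z \<in> F"
  shows "z ^ card F = z"
proof (cases "z = 0")
  case True
  with assms show ?thesis by (auto simp: card_gt_0_iff)
next
  case False
  have closed: "x \<in> F \<Longrightarrow> y \<in> F \<Longrightarrow> x * y \<in> F" "x \<in> F \<Longrightarrow> inverse x \<in> F" for x y
    using assms(2) unfolding is_subfield_def by auto
  have "(\<Prod>y\<in>F-{0}. z * y) = (\<Prod>y\<in>F-{0}. y)"
    by (rule prod.reindex_bij_witness[of _ "\<lambda>y. y / z" "\<lambda>y. z * y"])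
       (use False assms(3) in \<open>auto simp: closed divide_inverse mult.commute\<close>)
  moreover have "(\<Prod>y\<in>F-{0}. z * y) = z ^ card (F - {0}) * \<Prod>(F-{0})"
    by (simp add: prod.distrib)
  moreover have "\<Prod>(F-{0}) \<noteq> 0"
    using assms(1) by simp
  ultimately have "z ^ card (F - {0}) = 1"
    by simp
  moreover have "card F = Suc (card (F - {0}))"
    using assms(1,2) by (metis card_Suc_Diff1 is_subfield_def)
  ultimately show ?thesis
    by simp
qed

lemma power_card_eq_self: "(x::'k::{field,finite}) ^ CARD('k) = x"
  using subfield_power_card_eq_self[of UNIV x] by (simp add: is_subfield_def)

lemma power_card_power_eq_self: "(x::'k::{field,finite}) ^ (CARD('k) ^ i) = x"
  by (induction i) (simp_all add: power_mult power_card_eq_self flip: power_Suc2)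

lemma card_finite_field_ge_2: "CARD('k::{field,finite}) \<ge> 2"
proof -
  have "card {0::'k, 1} \<le> CARD('k)"
    by (rule card_mono) auto
  then show ?thesis
    by simp
qed

lemma finite_power_eq_const:
  assumes "n > 0"
  shows "finite {z::'a::idom. z ^ n = c}"
proof -
  define P :: "'a poly" where "P = monom 1 n - [:c:]"
  have "coeff P n = 1"
    using assms by (simp add: P_def coeff_monom coeff_pCons split: nat.split)
  then have "P \<noteq> 0"
    by auto
  moreover have "{z. z ^ n = c} = {z. poly P z = 0}"
    by (auto simp: P_def poly_monom)
  ultimately show ?thesis
    using poly_roots_finite by metis
qed

lemma card_power_eq_self_le:
  assumes "n \<ge> 2"
  shows "finite {z::'a::idom. z ^ n = z}" "card {z::'a. z ^ n = z} \<le> n"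
proof -
  define P :: "'a poly" where "P = monom 1 n - [:0, 1:]"
  have "coeff P n = 1"
    using assms by (simp add: P_def coeff_monom coeff_pCons split: nat.split)
  then have "P \<noteq> 0"
    by auto
  moreover have "degree P \<le> n"
    unfolding P_def using assms by (intro degree_diff_le) (auto simp: degree_monom_le)
  moreover have "{z. z ^ n = z} = {z. poly P z = 0}"
    by (auto simp: P_def poly_monom)
  ultimately show "finite {z::'a. z ^ n = z}" "card {z::'a. z ^ n = z} \<le> n"
    using poly_roots_finite card_poly_roots_bound by (metis, fastforce)
qed

text \<open>The polynomial \<open>(X + 1)^q - X^q - 1\<close> has degree below \<open>q\<close> but vanishes on all of \<open>K\<close>.\<close>
lemma of_nat_card_choose_eq_0:
  assumes "0 < k" "k < CARD('k::{field,finite})"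
  shows "of_nat (CARD('k) choose k) = (0::'k)"
proof -
  define q where "q = CARD('k)"
  define P :: "'k poly" where "P = (\<Sum>i\<in>{1..<q}. monom (of_nat (q choose i)) i)"
  have coeff_P: "coeff P j = (if j \<in> {1..<q} then of_nat (q choose j) else 0)" for j
    unfolding P_def coeff_sum coeff_monom by (cases "j \<in> {1..<q}") (auto intro: sum.neutral)
  have "poly P x = 0" for x :: 'k
  proof -
    have "(x + 1) ^ q = (\<Sum>i\<in>insert 0 (insert q {1..<q}). of_nat (q choose i) * x ^ i)"
      unfolding binomial_ring by (intro sum.cong) auto
    also have "\<dots> = 1 + x ^ q + poly P x"
      using card_finite_field_ge_2[where 'k='k]
      by (simp add: q_def P_def poly_sum poly_monom)
    finally show ?thesis
      using power_card_eq_self[of x] power_card_eq_self[of "x + 1"] by (simp add: q_def)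
  qed
  moreover have "degree P < q"
    using card_finite_field_ge_2[where 'k='k] unfolding q_def
    by (intro le_less_trans[OF degree_le[of "q - 1"]]) (auto simp: coeff_P q_def)
  ultimately have "P = 0"
    using card_poly_roots_bound[of P] by (force simp: q_def)
  then show ?thesis
    using coeff_P[of k] assms by (simp add: q_def)
qed

lemma card_power_add:
  fixes x y :: "'a::comm_ring_1"
  assumes "CHAR('a) = CHAR('k::{field,finite})"
  shows "(x + y) ^ CARD('k) = x ^ CARD('k) + y ^ CARD('k)"
proof -
  define q where "q = CARD('k)"
  have "(x + y) ^ q = (\<Sum>i\<in>{0, q}. of_nat (q choose i) * x ^ i * y ^ (q - i))"
    unfolding binomial_ring
  proof (intro sum.mono_neutral_right ballI)
    fix i assume "i \<in> {..q} - {0, q}"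
    then have "of_nat (q choose i) = (0::'k)"
      by (auto simp: q_def intro!: of_nat_card_choose_eq_0)
    then have "of_nat (q choose i) = (0::'a)"
      using assms by (simp add: of_nat_eq_0_iff_char_dvd)
    then show "of_nat (q choose i) * x ^ i * y ^ (q - i) = 0"
      by simp
  qed auto
  then show ?thesis
    using card_finite_field_ge_2[where 'k='k] by (simp add: q_def add_ac)
qed

lemma card_power_power_add:
  fixes x y :: "'a::comm_ring_1"
  assumes "CHAR('a) = CHAR('k::{field,finite})"
  shows "(x + y) ^ (CARD('k) ^ i) = x ^ (CARD('k) ^ i) + y ^ (CARD('k) ^ i)"
  by (induction i) (simp_all only: power_0 power_one_right power_Suc2 power_mult card_power_add[OF assms])

lemma card_power_power_sum:
  fixes f :: "'b \<Rightarrow> 'a::comm_ring_1"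
  assumes "CHAR('a) = CHAR('k::{field,finite})"
  shows "(\<Sum>x\<in>A. f x) ^ (CARD('k) ^ i) = (\<Sum>x\<in>A. f x ^ (CARD('k) ^ i))"
  by (induction A rule: infinite_finite_induct) (simp_all add: power_0_left card_power_power_add[OF assms])

lemma card_power_power_diff:
  fixes x y :: "'a::comm_ring_1"
  assumes "CHAR('a) = CHAR('k::{field,finite})"
  shows "(x - y) ^ (CARD('k) ^ i) = x ^ (CARD('k) ^ i) - y ^ (CARD('k) ^ i)"
  using card_power_power_add[OF assms, of "x - y" y i] by (simp add: algebra_simps)

lemma card_power_power_minus:
  fixes x :: "'a::comm_ring_1"
  assumes "CHAR('a) = CHAR('k::{field,finite})"
  shows "(- x) ^ (CARD('k) ^ i) = - (x ^ (CARD('k) ^ i))"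
  using card_power_power_diff[OF assms, of 0 x i] by (simp add: power_0_left)

lemma card_power_power_inj:
  fixes x y :: "'a::idom"
  assumes "CHAR('a) = CHAR('k::{field,finite})" "x ^ (CARD('k) ^ i) = y ^ (CARD('k) ^ i)"
  shows "x = y"
  using card_power_power_diff[OF assms(1), of x y i] assms(2) by simp

lemma to_ac_power_card_power: "to_ac (c::'k::{field,finite}) ^ (CARD('k) ^ i) = to_ac c"
  by (simp flip: to_ac_power add: power_card_power_eq_self)

lemma range_to_ac_iff: "z \<in> range to_ac \<longleftrightarrow> (z::'k::{field,finite} alg_closure) ^ CARD('k) = z"
proof -
  let ?Fix = "{z::'k alg_closure. z ^ CARD('k) = z}"
  have sub: "range to_ac \<subseteq> ?Fix"
    using to_ac_power_card_power[of _ 1] by auto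
  have fin: "finite ?Fix" and card_Fix: "card ?Fix \<le> CARD('k)"
    using card_power_eq_self_le[OF card_finite_field_ge_2] by blast+
  have "card (range (to_ac :: 'k \<Rightarrow> _)) = CARD('k)"
    by (simp add: card_image inj_to_ac)
  then have "range to_ac = ?Fix"
    using card_subset_eq[OF fin sub] card_Fix card_mono[OF fin sub] by linarith
  then show ?thesis
    by auto
qed

lemma (in vector_space) card_span_independent:
  assumes "finite (UNIV :: 'a set)" "finite B" "independent B"
  shows "card (span B) = CARD('a) ^ card B"
  using assms(2,3)
proof (induction B rule: finite_induct)
  case (insert b B)
  then have "independent B" and b: "b \<notin> span B"
    by (simp_all add: independent_insert)
  have span_insert_eq: "span (insert b B) = (\<lambda>(c, v). c *s b + v) ` (UNIV \<times> span B)"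
  proof (intro equalityI subsetI)
    fix x assume "x \<in> span (insert b B)"
    then obtain c where "x - c *s b \<in> span B"
      by (auto simp: span_breakdown_eq)
    then show "x \<in> (\<lambda>(c, v). c *s b + v) ` (UNIV \<times> span B)"
      by (intro image_eqI[of _ _ "(c, x - c *s b)"]) auto
  next
    fix x assume "x \<in> (\<lambda>(c, v). c *s b + v) ` (UNIV \<times> span B)"
    then obtain c v where "v \<in> span B" "x = c *s b + v"
      by auto
    then show "x \<in> span (insert b B)"
      unfolding span_breakdown_eq by (intro exI[of _ c]) simp
  qed
  have "inj_on (\<lambda>(c, v). c *s b + v) (UNIV \<times> span B)"
  proof (rule inj_onI, clarify)
    fix c v c' v' assume v: "v \<in> span B" "v' \<in> span B" and eq: "c *s b + v = c' *s b + v'"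
    have "c = c'"
    proof (rule ccontr)
      assume "c \<noteq> c'"
      have "(c - c') *s b = v' - v"
        using eq by (simp add: scale_left_diff_distrib algebra_simps)
      then have "inverse (c - c') *s ((c - c') *s b) \<in> span B"
        using v by (simp add: span_diff span_scale)
      with \<open>c \<noteq> c'\<close> b show False
        by simp
    qed
    with eq show "c = c' \<and> v = v'"
      by simp
  qed
  then have "card (span (insert b B)) = CARD('a) * card (span B)"
    unfolding span_insert_eq by (simp add: card_image card_cartesian_product)
  with insert show ?case
    using \<open>independent B\<close> by simp
qed simp

lemma finite_subfield_card:
  fixes F :: "'k::{field,finite} alg_closure set"
  assumes "finite F" "is_subfield F" "range to_ac \<subseteq> F"
  obtains d where "card F = CARD('k) ^ d"
proof -
  interpret V: vector_space "\<lambda>(c::'k) (z::'k alg_closure). to_ac c * z"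
    by unfold_locales (auto simp: algebra_simps)
  obtain B where B: "B \<subseteq> F" "V.independent B" "F \<subseteq> V.span B"
    using V.maximal_independent_subset by blast
  have "V.subspace F"
    using assms(2,3) unfolding V.subspace_def is_subfield_def by auto
  then have "F = V.span B"
    using B V.span_minimal by blast
  moreover have "finite B"
    using B(1) assms(1) finite_subset by blast
  ultimately have "card F = CARD('k) ^ card B"
    using V.card_span_independent[OF _ _ B(2)] by simp
  then show ?thesis
    by (rule that)
qed

section \<open>Frobenius orbits of functions and their traces\<close>

definition frob :: "nat \<Rightarrow> ('g \<Rightarrow> 'k::{field,finite} alg_closure) \<Rightarrow> 'g \<Rightarrow> 'k alg_closure" where
  "frob i \<chi> = (\<lambda>x. \<chi> x ^ (CARD('k) ^ i))"

definition frob_period :: "('g \<Rightarrow> 'k::{field,finite} alg_closure) \<Rightarrow> nat" where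
  "frob_period \<chi> = (LEAST s. 0 < s \<and> frob s \<chi> = \<chi>)"

lemma frob_0 [simp]: "frob 0 \<chi> = \<chi>"
  by (simp add: frob_def)

lemma frob_frob: "frob i (frob j \<chi>) = frob (i + j) \<chi>"
  by (simp add: frob_def power_add mult.commute flip: power_mult)

lemma frob_inj: "frob i \<chi> = frob i \<psi> \<Longrightarrow> \<chi> = \<psi>"
  unfolding frob_def fun_eq_iff using card_power_power_inj[OF CHAR_alg_closure] by blast

lemma frob_mult_period: "frob s \<chi> = \<chi> \<Longrightarrow> frob (k * s) \<chi> = \<chi>"
  by (induction k) (simp_all flip: frob_frob)

lemma frob_mod_period:
  assumes "frob s \<chi> = \<chi>"
  shows "frob (i mod s) \<chi> = frob i \<chi>"
proof -
  have "frob i \<chi> = frob (i mod s) (frob (i div s * s) \<chi>)"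
    by (simp add: frob_frob)
  then show ?thesis
    by (simp add: frob_mult_period[OF assms])
qed

lemma frob_period:
  assumes "\<exists>s>0. frob s \<chi> = \<chi>"
  shows "0 < frob_period \<chi>" "frob (frob_period \<chi>) \<chi> = \<chi>"
  using LeastI_ex[OF assms] unfolding frob_period_def by auto

lemma frob_period_le: "0 < t \<Longrightarrow> frob t \<chi> = \<chi> \<Longrightarrow> frob_period \<chi> \<le> t"
  unfolding frob_period_def by (simp add: Least_le)

lemma frob_diff_period:
  assumes "i < j" "frob i \<chi> = frob j \<chi>"
  shows "frob (j - i) \<chi> = \<chi>"
proof -
  have "frob i (frob (j - i) \<chi>) = frob i \<chi>"
    using assms by (simp add: frob_frob)
  then show ?thesis
    by (rule frob_inj)
qed

lemma
  shows is_subfield_gen_field: "is_subfield (gen_field f)"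
    and range_to_ac_subset_gen_field: "range to_ac \<subseteq> gen_field f"
    and range_subset_gen_field: "range f \<subseteq> gen_field f"
    and gen_field_least: "is_subfield F \<Longrightarrow> range to_ac \<subseteq> F \<Longrightarrow> range f \<subseteq> F \<Longrightarrow> gen_field f \<subseteq> F"
  unfolding gen_field_def is_subfield_def by blast+

lemma is_subfield_card_power_fixed:
  "is_subfield {z::'k::{field,finite} alg_closure. z ^ (CARD('k) ^ s) = z}"
  unfolding is_subfield_def
  by (auto simp: card_power_power_add card_power_power_minus power_mult_distrib power_inverse)

lemma card_gen_field:
  fixes \<chi> :: "'g \<Rightarrow> 'k::{field,finite} alg_closure"
  assumes "\<exists>s>0. frob s \<chi> = \<chi>"
  shows "card (gen_field \<chi>) = CARD('k) ^ frob_period \<chi>"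
proof -
  define s where "s = frob_period \<chi>"
  define q where "q = CARD('k)"
  have q: "q \<ge> 2"
    using card_finite_field_ge_2 by (simp add: q_def)
  define Fix where "Fix = {z::'k alg_closure. z ^ (q ^ s) = z}"
  have "q ^ 1 \<le> q ^ s"
    using frob_period(1)[OF assms] q unfolding s_def by (intro power_increasing) simp_all
  with q have "2 \<le> q ^ s"
    by simp
  then have fin: "finite Fix" and card_Fix: "card Fix \<le> q ^ s"
    unfolding Fix_def by (fact card_power_eq_self_le)+
  have sub: "gen_field \<chi> \<subseteq> Fix"
  proof (rule gen_field_least)
    show "is_subfield Fix"
      unfolding Fix_def q_def by (rule is_subfield_card_power_fixed)
    show "range to_ac \<subseteq> Fix"
      unfolding Fix_def q_def using to_ac_power_card_power by blast
    have "\<chi> x ^ (q ^ s) = \<chi> x" for x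
      using fun_cong[OF frob_period(2)[OF assms], of x] unfolding frob_def s_def q_def .
    then show "range \<chi> \<subseteq> Fix"
      unfolding Fix_def by blast
  qed
  have fin_gen: "finite (gen_field \<chi>)"
    by (rule finite_subset[OF sub fin])
  have card_le: "card (gen_field \<chi>) \<le> q ^ s"
    using card_mono[OF fin sub] card_Fix by linarith
  obtain d where d: "card (gen_field \<chi>) = q ^ d"
    unfolding q_def by (rule finite_subfield_card[OF fin_gen is_subfield_gen_field range_to_ac_subset_gen_field])
  have "{0, 1} \<subseteq> gen_field \<chi>"
    using is_subfield_gen_field[of \<chi>] unfolding is_subfield_def by blast
  from card_mono[OF fin_gen this] have "2 \<le> q ^ d"
    using d by simp
  then have "d > 0"
    by (cases d) simp_all
  moreover have "frob d \<chi> = \<chi>"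
  proof (rule ext)
    fix x
    have "\<chi> x \<in> gen_field \<chi>"
      using range_subset_gen_field[of \<chi>] by blast
    then have "\<chi> x ^ card (gen_field \<chi>) = \<chi> x"
      by (rule subfield_power_card_eq_self[OF fin_gen is_subfield_gen_field])
    then show "frob d \<chi> x = \<chi> x"
      using d by (simp add: frob_def q_def)
  qed
  ultimately have "s \<le> d"
    unfolding s_def by (rule frob_period_le)
  moreover have "d \<le> s"
    using power_le_imp_le_exp[of q d s] card_le d q by simp
  ultimately show ?thesis
    using d unfolding s_def q_def by simp
qed

lemma deg_r_eq_frob_period:
  fixes \<chi> :: "'g \<Rightarrow> 'k::{field,finite} alg_closure"
  assumes "\<exists>s>0. frob s \<chi> = \<chi>"
  shows "deg_r \<chi> = frob_period \<chi>"
  unfolding deg_r_def card_gen_field[OF assms]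
  using card_finite_field_ge_2[where 'k='k] by (auto intro!: the_equality simp: power_inject_exp)

lemma Tr_eq_sum_frob:
  fixes \<chi> :: "'g \<Rightarrow> 'k::{field,finite} alg_closure"
  assumes "\<exists>s>0. frob s \<chi> = \<chi>"
  shows "Tr \<chi> x = (\<Sum>i<frob_period \<chi>. frob i \<chi> x)"
  unfolding Tr_def deg_r_eq_frob_period[OF assms] frob_def ..

text \<open>The \<open>q\<close>-th power map shifts the summands of the trace cyclically.\<close>
lemma Tr_in_range_to_ac:
  fixes \<chi> :: "'g \<Rightarrow> 'k::{field,finite} alg_closure"
  assumes "\<exists>s>0. frob s \<chi> = \<chi>"
  shows "Tr \<chi> x \<in> range to_ac"
proof -
  define s where "s = frob_period \<chi>"
  define f where "f i = frob i \<chi> x" for i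
  have "f s = f 0"
    using frob_period(2)[OF assms] by (simp add: f_def s_def)
  have "Tr \<chi> x ^ CARD('k) = (\<Sum>i<s. f i) ^ (CARD('k) ^ 1)"
    unfolding Tr_eq_sum_frob[OF assms] s_def f_def by simp
  also have "\<dots> = (\<Sum>i<s. f (Suc i))"
    unfolding card_power_power_sum[OF CHAR_alg_closure]
    by (simp add: f_def frob_def mult.commute flip: power_mult)
  also have "\<dots> = (\<Sum>i<s. f i)"
    using sum.lessThan_Suc_shift[of f s] \<open>f s = f 0\<close> by (simp add: add.commute)
  also have "\<dots> = Tr \<chi> x"
    unfolding Tr_eq_sum_frob[OF assms] s_def f_def ..
  finally show ?thesis
    unfolding range_to_ac_iff .
qed

lemma to_ac_TrK:
  assumes "\<exists>s>0. frob s \<chi> = \<chi>"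
  shows "to_ac (TrK \<chi> x) = Tr \<chi> x"
  unfolding TrK_def using Tr_in_range_to_ac[OF assms] by (rule to_ac_of_ac)

definition frob_orbit :: "('g \<Rightarrow> 'k::{field,finite} alg_closure) \<Rightarrow> ('g \<Rightarrow> 'k alg_closure) set" where
  "frob_orbit \<chi> = range (\<lambda>i. frob i \<chi>)"

definition orbit_rep :: "('g \<Rightarrow> 'k::{field,finite} alg_closure) \<Rightarrow> 'g \<Rightarrow> 'k alg_closure" where
  "orbit_rep \<chi> = (SOME \<psi>. \<psi> \<in> frob_orbit \<chi>)"

lemma self_in_frob_orbit: "\<chi> \<in> frob_orbit \<chi>"
  unfolding frob_orbit_def by (metis frob_0 rangeI)

lemma orbit_rep_in_frob_orbit: "orbit_rep \<chi> \<in> frob_orbit \<chi>"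
  unfolding orbit_rep_def by (rule someI[where P="\<lambda>\<psi>. \<psi> \<in> frob_orbit \<chi>", OF self_in_frob_orbit])

lemma frob_orbit_eq:
  assumes "\<exists>s>0. frob s \<chi> = \<chi>" "\<psi> \<in> frob_orbit \<chi>"
  shows "frob_orbit \<psi> = frob_orbit \<chi>"
proof -
  obtain i where \<psi>: "\<psi> = frob i \<chi>"
    using assms(2) unfolding frob_orbit_def by blast
  define s where "s = frob_period \<chi>"
  have "frob j \<chi> = frob (j + i * (s - 1)) \<psi>" for j
  proof -
    have "j + i * (s - 1) + i = j + i * s"
      using frob_period(1)[OF assms(1)] unfolding s_def by (cases "frob_period \<chi>") simp_all
    then have "frob (j + i * (s - 1)) \<psi> = frob j (frob (i * s) \<chi>)"
      unfolding \<psi> frob_frob by (simp only: add.assoc)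
    then show ?thesis
      using frob_mult_period[OF frob_period(2)[OF assms(1)]] unfolding s_def by simp
  qed
  then show ?thesis
    unfolding frob_orbit_def \<psi> by (auto simp: frob_frob)
qed

lemma frob_orbit_orbit_rep:
  assumes "\<exists>s>0. frob s \<chi> = \<chi>"
  shows "frob_orbit (orbit_rep \<chi>) = frob_orbit \<chi>"
  using frob_orbit_eq[OF assms orbit_rep_in_frob_orbit] .

lemma sum_frob_orbit:
  assumes "\<exists>s>0. frob s \<chi> = \<chi>"
  shows "(\<Sum>\<psi>\<in>frob_orbit \<chi>. \<psi> y) = Tr \<chi> y"
proof -
  define s where "s = frob_period \<chi>"
  have "frob_orbit \<chi> = (\<lambda>i. frob i \<chi>) ` {..<s}"
  proof (intro equalityI subsetI)
    fix \<psi> assume "\<psi> \<in> frob_orbit \<chi>"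
    then obtain i where "\<psi> = frob i \<chi>"
      unfolding frob_orbit_def by blast
    then have "\<psi> = frob (i mod s) \<chi>"
      using frob_mod_period[OF frob_period(2)[OF assms]] unfolding s_def by simp
    moreover have "i mod s < s"
      using frob_period(1)[OF assms] unfolding s_def by simp
    ultimately show "\<psi> \<in> (\<lambda>i. frob i \<chi>) ` {..<s}"
      by blast
  qed (auto simp: frob_orbit_def)
  moreover have "inj_on (\<lambda>i. frob i \<chi>) {..<s}"
  proof (rule inj_onI, rule ccontr)
    have False if "a < b" "b < s" "frob a \<chi> = frob b \<chi>" for a b
      using frob_period_le[of "b - a" \<chi>] frob_diff_period[OF that(1,3)] that(1,2)
      unfolding s_def by simp
    then show "i \<in> {..<s} \<Longrightarrow> j \<in> {..<s} \<Longrightarrow> frob i \<chi> = frob j \<chi> \<Longrightarrow> i \<noteq> j \<Longrightarrow> False" for i j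
      by (metis lessThan_iff linorder_neqE_nat)
  qed
  ultimately have "(\<Sum>\<psi>\<in>frob_orbit \<chi>. \<psi> y) = (\<Sum>i<s. frob i \<chi> y)"
    by (simp add: sum.reindex)
  then show ?thesis
    unfolding Tr_eq_sum_frob[OF assms] s_def .
qed

lemma sum_frob_stable_eq_sum_Tr:
  fixes H :: "('g \<Rightarrow> 'k::{field,finite} alg_closure) set"
  assumes "finite H" and periodic: "\<And>\<chi>. \<chi> \<in> H \<Longrightarrow> \<exists>s>0. frob s \<chi> = \<chi>"
    and stable: "\<And>\<chi> i. \<chi> \<in> H \<Longrightarrow> frob i \<chi> \<in> H"
  shows "(\<Sum>\<chi>\<in>H. \<chi> y) = (\<Sum>\<rho>\<in>orbit_rep ` H. Tr \<rho> y)"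
proof -
  have orbit_subset: "frob_orbit \<chi> \<subseteq> H" if "\<chi> \<in> H" for \<chi>
    using stable[OF that] unfolding frob_orbit_def by blast
  have fiber: "{\<psi> \<in> H. orbit_rep \<psi> = \<rho>} = frob_orbit \<rho>" if \<rho>: "\<rho> \<in> orbit_rep ` H" for \<rho>
  proof -
    obtain \<chi> where \<chi>: "\<chi> \<in> H" "\<rho> = orbit_rep \<chi>"
      using \<rho> by blast
    then have "\<rho> \<in> H"
      using orbit_subset[OF \<chi>(1)] orbit_rep_in_frob_orbit[of \<chi>] by blast
    have "orbit_rep \<psi> = \<rho> \<longleftrightarrow> \<psi> \<in> frob_orbit \<rho>" if "\<psi> \<in> H" for \<psi>
    proof
      assume "orbit_rep \<psi> = \<rho>"
      then show "\<psi> \<in> frob_orbit \<rho>"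
        using frob_orbit_orbit_rep[OF periodic[OF \<open>\<psi> \<in> H\<close>]] self_in_frob_orbit by metis
    next
      assume "\<psi> \<in> frob_orbit \<rho>"
      then have "frob_orbit \<psi> = frob_orbit \<chi>"
        using frob_orbit_eq[OF periodic[OF \<open>\<rho> \<in> H\<close>]] frob_orbit_orbit_rep[OF periodic[OF \<chi>(1)]] \<chi>(2)
        by simp
      then show "orbit_rep \<psi> = \<rho>"
        unfolding \<chi>(2) orbit_rep_def by simp
    qed
    then show ?thesis
      using orbit_subset[OF \<open>\<rho> \<in> H\<close>] by blast
  qed
  have "(\<Sum>\<chi>\<in>H. \<chi> y) = (\<Sum>\<rho>\<in>orbit_rep ` H. \<Sum>\<psi>\<in>{\<psi> \<in> H. orbit_rep \<psi> = \<rho>}. \<psi> y)"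
    using \<open>finite H\<close> by (intro sum.group[symmetric]) auto
  also have "\<dots> = (\<Sum>\<rho>\<in>orbit_rep ` H. Tr \<rho> y)"
  proof (rule sum.cong[OF refl])
    fix \<rho> assume "\<rho> \<in> orbit_rep ` H"
    then have "\<rho> \<in> H"
      using orbit_subset orbit_rep_in_frob_orbit by (metis image_iff subsetD)
    with fiber[OF \<open>\<rho> \<in> orbit_rep ` H\<close>] show "(\<Sum>\<psi>\<in>{\<psi> \<in> H. orbit_rep \<psi> = \<rho>}. \<psi> y) = Tr \<rho> y"
      using sum_frob_orbit[OF periodic] by simp
  qed
  finally show ?thesis .
qed

section \<open>Partial characters and their extension\<close>

definition nsmul :: "nat \<Rightarrow> 'g::ab_group_add \<Rightarrow> 'g" where
  "nsmul k x = (\<Sum>i<k. x)"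

lemma nsmul_0 [simp]: "nsmul 0 x = 0"
  by (simp add: nsmul_def)

lemma nsmul_Suc: "nsmul (Suc k) x = x + nsmul k x"
  by (simp add: nsmul_def add.commute)

lemma nsmul_add: "nsmul (a + b) x = nsmul a x + nsmul b x"
  by (induction a) (simp_all add: nsmul_Suc add.assoc)

lemma nsmul_mult: "nsmul (a * b) x = nsmul a (nsmul b x)"
  by (induction a) (simp_all add: nsmul_Suc nsmul_add)

lemma sum_constant_nsmul: "finite A \<Longrightarrow> (\<Sum>a\<in>A. y) = nsmul (card A) y"
  by (induction A rule: finite_induct) (simp_all add: nsmul_Suc)

lemma
  assumes "add_subgroup H"
  shows add_subgroup_zero: "0 \<in> H"
    and add_subgroup_add: "x \<in> H \<Longrightarrow> y \<in> H \<Longrightarrow> x + y \<in> H"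
    and add_subgroup_uminus_iff: "- x \<in> H \<longleftrightarrow> x \<in> H"
    and add_subgroup_diff: "x \<in> H \<Longrightarrow> y \<in> H \<Longrightarrow> x - y \<in> H"
  using assms unfolding add_subgroup_def by (metis diff_conv_add_uminus minus_minus)+

lemma add_subgroup_sum:
  assumes "add_subgroup H" "\<And>a. a \<in> A \<Longrightarrow> f a \<in> H"
  shows "sum f A \<in> H"
  using assms(2)
  by (induction A rule: infinite_finite_induct) (simp_all add: add_subgroup_zero add_subgroup_add assms(1))

lemma add_subgroup_nsmul: "add_subgroup H \<Longrightarrow> x \<in> H \<Longrightarrow> nsmul k x \<in> H"
  unfolding nsmul_def by (rule add_subgroup_sum) auto

definition order_modulo :: "'g::ab_group_add set \<Rightarrow> 'g \<Rightarrow> nat" where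
  "order_modulo H g = (LEAST d. 0 < d \<and> nsmul d g \<in> H)"

lemma order_modulo:
  assumes "\<exists>d>0. nsmul d g \<in> H"
  shows "0 < order_modulo H g" "nsmul (order_modulo H g) g \<in> H"
  using LeastI_ex[OF assms] unfolding order_modulo_def by auto

lemma order_modulo_dvd:
  assumes H: "add_subgroup H" and g: "\<exists>d>0. nsmul d g \<in> H" and j: "nsmul j g \<in> H"
  shows "order_modulo H g dvd j"
proof -
  define d where "d = order_modulo H g"
  have "nsmul j g = nsmul (j mod d) g + nsmul (j div d) (nsmul d g)"
    by (simp flip: nsmul_add nsmul_mult)
  then have "nsmul (j mod d) g = nsmul j g - nsmul (j div d) (nsmul d g)"
    by (simp add: algebra_simps)
  also have "\<dots> \<in> H"
    using order_modulo(2)[OF g] j H unfolding d_def by (simp add: add_subgroup_diff add_subgroup_nsmul)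
  finally have "nsmul (j mod d) g \<in> H" .
  moreover have "j mod d < d"
    using order_modulo(1)[OF g] unfolding d_def by simp
  then have "\<not> (0 < j mod d \<and> nsmul (j mod d) g \<in> H)"
    unfolding d_def order_modulo_def by (rule not_less_Least)
  ultimately show ?thesis
    unfolding d_def by auto
qed

definition char_on :: "'g::ab_group_add set \<Rightarrow> ('g \<Rightarrow> 'a::field) \<Rightarrow> bool" where
  "char_on H \<chi> \<longleftrightarrow> (\<forall>x\<in>H. \<chi> x \<noteq> 0) \<and> (\<forall>x\<in>H. \<forall>y\<in>H. \<chi> (x + y) = \<chi> x * \<chi> y)"

lemma is_char_iff_char_on_UNIV: "is_char \<chi> \<longleftrightarrow> char_on UNIV \<chi>"
  by (simp add: is_char_def char_on_def)

lemma char_on_zero: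
  assumes "add_subgroup H" "char_on H \<chi>"
  shows "\<chi> 0 = 1"
  using assms add_subgroup_zero[OF assms(1)] unfolding char_on_def by (metis add_0 mult_cancel_right2)

lemma char_on_nsmul:
  assumes "add_subgroup H" "char_on H \<chi>" "h \<in> H"
  shows "\<chi> (nsmul m h) = \<chi> h ^ m"
  by (induction m)
     (use assms char_on_zero in \<open>simp_all add: nsmul_Suc char_on_def add_subgroup_nsmul\<close>)

lemma
  assumes "is_char \<chi>"
  shows is_char_add: "\<chi> (x + y) = \<chi> x * \<chi> y"
    and is_char_nonzero: "\<chi> x \<noteq> 0"
    and is_char_zero: "\<chi> 0 = 1"
    and is_char_nsmul: "\<chi> (nsmul k x) = \<chi> x ^ k"
proof -
  have "add_subgroup UNIV" "char_on UNIV \<chi>"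
    using assms by (simp_all add: add_subgroup_def is_char_iff_char_on_UNIV)
  then show "\<chi> 0 = 1" "\<chi> (nsmul k x) = \<chi> x ^ k"
    using char_on_zero char_on_nsmul by blast+
  show "\<chi> (x + y) = \<chi> x * \<chi> y" "\<chi> x \<noteq> 0"
    using assms by (simp_all add: is_char_def)
qed

lemma add_subgroup_extend:
  assumes H: "add_subgroup H" and "0 < d" "nsmul d g \<in> H"
  shows "add_subgroup {h + nsmul k g |h k. h \<in> H}"
  unfolding add_subgroup_def
proof (intro conjI ballI)
  have "0 = 0 + nsmul 0 g"
    by simp
  then show "0 \<in> {h + nsmul k g |h k. h \<in> H}"
    using add_subgroup_zero[OF H] by blast
  fix x y assume "x \<in> {h + nsmul k g |h k. h \<in> H}" "y \<in> {h + nsmul k g |h k. h \<in> H}"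
  then obtain h k h' k' where hk: "h \<in> H" "x = h + nsmul k g" "h' \<in> H" "y = h' + nsmul k' g"
    by blast
  have "x + y = (h + h') + nsmul (k + k') g"
    unfolding hk nsmul_add by (simp add: algebra_simps)
  then show "x + y \<in> {h + nsmul k g |h k. h \<in> H}"
    using add_subgroup_add[OF H hk(1,3)] by blast
  text \<open>\<open>-(k g) = k (d - 1) g - k (d g)\<close>, and \<open>k (d g) \<in> H\<close>.\<close>
  have "k * d = k * (d - 1) + k"
    using \<open>0 < d\<close> by (cases d) simp_all
  then have "nsmul k (nsmul d g) = nsmul (k * (d - 1)) g + nsmul k g"
    by (simp only: flip: nsmul_mult nsmul_add)
  then have "- x = (- h - nsmul k (nsmul d g)) + nsmul (k * (d - 1)) g"
    unfolding hk by (simp add: algebra_simps)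
  moreover have "- h - nsmul k (nsmul d g) \<in> H"
    using hk(1) assms by (simp add: add_subgroup_diff add_subgroup_uminus_iff add_subgroup_nsmul)
  ultimately show "- x \<in> {h + nsmul k g |h k. h \<in> H}"
    by blast
qed

lemma char_on_extend_well_defined:
  fixes \<chi> :: "'g::ab_group_add \<Rightarrow> 'a::field"
  assumes H: "add_subgroup H" "char_on H \<chi>" and g: "\<exists>d>0. nsmul d g \<in> H"
    and \<zeta>: "\<zeta> ^ order_modulo H g = \<chi> (nsmul (order_modulo H g) g)"
    and h: "h \<in> H" "h' \<in> H" "h + nsmul k g = h' + nsmul k' g"
  shows "\<chi> h * \<zeta> ^ k = \<chi> h' * \<zeta> ^ k'"
proof -
  define d where "d = order_modulo H g"
  have *: "\<chi> h * \<zeta> ^ k = \<chi> h' * \<zeta> ^ k'"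
    if h: "h \<in> H" "h' \<in> H" "h + nsmul k g = h' + nsmul k' g" and "k \<le> k'" for h h' k k'
  proof -
    have "h + nsmul k g = h' + nsmul k g + nsmul (k' - k) g"
      using h(3) \<open>k \<le> k'\<close> by (simp add: add.assoc flip: nsmul_add)
    then have "nsmul (k' - k) g = h - h'"
      by (simp add: algebra_simps)
    then have "nsmul (k' - k) g \<in> H"
      using h H by (simp add: add_subgroup_diff)
    then obtain m where m: "k' - k = d * m"
      unfolding d_def using order_modulo_dvd[OF H(1) g] by (blast elim: dvdE)
    have "h = h' + nsmul m (nsmul d g)"
      using \<open>nsmul (k' - k) g = h - h'\<close> unfolding m mult.commute[of d] nsmul_mult by simp
    then have "\<chi> h = \<chi> h' * \<zeta> ^ (d * m)"
      using H h(2) order_modulo(2)[OF g] \<zeta>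
      by (simp add: char_on_def add_subgroup_nsmul char_on_nsmul d_def power_mult)
    moreover have "k' = k + d * m"
      using m \<open>k \<le> k'\<close> by simp
    ultimately show ?thesis
      by (simp add: power_add mult_ac)
  qed
  show ?thesis
    using *[OF h] *[OF h(2,1) h(3)[symmetric]] by (cases "k \<le> k'") auto
qed

lemma char_on_extend:
  fixes \<chi> :: "'g::ab_group_add \<Rightarrow> 'a::field"
  assumes H: "add_subgroup H" "char_on H \<chi>" and g: "\<exists>d>0. nsmul d g \<in> H"
    and \<zeta>: "\<zeta> ^ order_modulo H g = \<chi> (nsmul (order_modulo H g) g)"
  obtains H' \<chi>' where "add_subgroup H'" "insert g H \<subseteq> H'" "char_on H' \<chi>'" "\<forall>x\<in>H. \<chi>' x = \<chi> x"
    "\<chi>' g = \<zeta>"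
proof -
  define H' where "H' = {h + nsmul k g |h k. h \<in> H}"
  define \<kappa> where "\<kappa> x = (SOME k. x - nsmul k g \<in> H)" for x
  define \<chi>' where "\<chi>' x = \<chi> (x - nsmul (\<kappa> x) g) * \<zeta> ^ \<kappa> x" for x
  have \<chi>': "\<chi>' (h + nsmul k g) = \<chi> h * \<zeta> ^ k" if "h \<in> H" for h k
  proof -
    have "h + nsmul k g - nsmul k g \<in> H"
      using that by simp
    then have "h + nsmul k g - nsmul (\<kappa> (h + nsmul k g)) g \<in> H"
      unfolding \<kappa>_def by (rule someI)
    then show ?thesis
      unfolding \<chi>'_def using that
      by (intro char_on_extend_well_defined[OF H g \<zeta>]) (simp_all add: algebra_simps)
  qed
  have \<zeta>_nonzero: "\<zeta> \<noteq> 0"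
    using \<zeta> H(2) order_modulo[OF g] unfolding char_on_def by (metis power_0_left less_not_refl)
  have "char_on H' \<chi>'"
    unfolding char_on_def H'_def
  proof (intro conjI ballI; elim CollectE exE conjE)
    fix x h k assume "x = h + nsmul k g" "h \<in> H"
    then show "\<chi>' x \<noteq> 0"
      using \<chi>' H(2) \<zeta>_nonzero by (simp add: char_on_def)
    fix y h' k' assume "y = h' + nsmul k' g" "h' \<in> H"
    have "x + y = (h + h') + nsmul (k + k') g"
      unfolding \<open>x = h + nsmul k g\<close> \<open>y = h' + nsmul k' g\<close> nsmul_add by (simp add: algebra_simps)
    then have "\<chi>' (x + y) = \<chi> (h + h') * \<zeta> ^ (k + k')"
      using \<chi>' add_subgroup_add[OF H(1) \<open>h \<in> H\<close> \<open>h' \<in> H\<close>] by simp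
    also have "\<dots> = \<chi>' x * \<chi>' y"
      using \<chi>' \<open>x = h + nsmul k g\<close> \<open>y = h' + nsmul k' g\<close> \<open>h \<in> H\<close> \<open>h' \<in> H\<close> H(2)
      by (simp add: char_on_def power_add mult_ac)
    finally show "\<chi>' (x + y) = \<chi>' x * \<chi>' y" .
  qed
  moreover have "add_subgroup H'"
    unfolding H'_def using H(1) order_modulo[OF g] by (rule add_subgroup_extend)
  moreover have "insert g H \<subseteq> H'"
  proof -
    have "g = 0 + nsmul 1 g" "\<And>h. h = h + nsmul 0 g"
      by (simp_all add: nsmul_def)
    then show ?thesis
      unfolding H'_def using add_subgroup_zero[OF H(1)] by blast
  qed
  moreover have "\<forall>x\<in>H. \<chi>' x = \<chi> x" "\<chi>' g = \<zeta>"
    using \<chi>'[of _ 0] \<chi>'[OF add_subgroup_zero[OF H(1)], of 1] char_on_zero[OF H]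
    by (simp_all add: nsmul_Suc)
  ultimately show ?thesis
    using that by blast
qed

lemma char_on_extend_finite:
  fixes \<chi> :: "'g::ab_group_add \<Rightarrow> 'a::alg_closed_field"
  assumes "finite S" "add_subgroup H" "char_on H \<chi>" and torsion: "\<And>g. \<exists>d>0. nsmul d g \<in> H"
  obtains H' \<chi>' where "add_subgroup H'" "H \<union> S \<subseteq> H'" "char_on H' \<chi>'" "\<forall>x\<in>H. \<chi>' x = \<chi> x"
proof -
  have "\<exists>H' \<chi>'. add_subgroup H' \<and> H \<union> S \<subseteq> H' \<and> char_on H' \<chi>' \<and> (\<forall>x\<in>H. \<chi>' x = \<chi> x)"
    using assms(1)
  proof (induction S rule: finite_induct)
    case empty
    then show ?case
      using assms(2,3) by blast
  next
    case (insert g S)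
    then obtain H1 \<chi>1 where H1: "add_subgroup H1" "H \<union> S \<subseteq> H1" "char_on H1 \<chi>1" "\<forall>x\<in>H. \<chi>1 x = \<chi> x"
      by blast
    have g: "\<exists>d>0. nsmul d g \<in> H1"
      using torsion[of g] H1(2) by blast
    obtain \<zeta> where "\<zeta> ^ order_modulo H1 g = \<chi>1 (nsmul (order_modulo H1 g) g)"
      using nth_root_exists[OF order_modulo(1)[OF g]] by blast
    then obtain H2 \<chi>2 where "add_subgroup H2" "insert g H1 \<subseteq> H2" "char_on H2 \<chi>2" "\<forall>x\<in>H1. \<chi>2 x = \<chi>1 x"
      by (rule char_on_extend[OF H1(1,3) g])
    with H1 show ?case
      by (intro exI[of _ H2] exI[of _ \<chi>2]) auto
  qed
  with that show ?thesis
    by blast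
qed

lemma exists_root_of_unity_ne_1:
  assumes "2 \<le> d" "of_nat d \<noteq> (0::'a::alg_closed_field)"
  obtains \<zeta> where "\<zeta> ^ d = 1" "\<zeta> \<noteq> (1::'a)"
proof -
  have "0 < d - 1"
    using assms(1) by simp
  then obtain \<zeta> :: 'a where "(\<Sum>k\<le>d - 1. 1 * \<zeta> ^ k) = 0"
    using alg_closed[of "d - 1" "\<lambda>_. 1"] by force
  moreover have "{..d - 1} = {..<d}"
    using assms(1) by auto
  ultimately have sum: "(\<Sum>k<d. \<zeta> ^ k) = 0"
    by simp
  have "1 - \<zeta> ^ d = (1 - \<zeta>) * (\<Sum>k<d. \<zeta> ^ k)"
    by (rule one_diff_power_eq)
  with sum have "\<zeta> ^ d = 1"
    by simp
  moreover have "\<zeta> \<noteq> 1"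
  proof
    assume "\<zeta> = 1"
    then have "(\<Sum>k<d. \<zeta> ^ k) = of_nat d"
      by simp
    with sum assms(2) show False
      by simp
  qed
  ultimately show ?thesis
    by (rule that)
qed

lemma of_nat_ne_0_if_dvd_coprime_CHAR:
  assumes "coprime n CHAR('a::field)" "d dvd n"
  shows "of_nat d \<noteq> (0::'a)"
proof
  assume "of_nat d = (0::'a)"
  then have "CHAR('a) dvd d"
    by (simp add: of_nat_eq_0_iff_char_dvd)
  then have "CHAR('a) dvd n"
    using assms(2) by (rule dvd_trans)
  then have "is_unit CHAR('a)"
    by (rule coprime_common_divisor[OF assms(1) _ dvd_refl])
  then show False
    by simp
qed

section \<open>Characters trivial on a subgroup of finite index\<close>

locale finite_index_subgroup =
  fixes L :: "'g::ab_group_add set"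
  assumes add_subgroup: "add_subgroup L"
    and finite_cosets: "finite ((\<lambda>x. (+) x ` L) ` UNIV)"
begin

definition rep :: "'g \<Rightarrow> 'g" where
  "rep x = (SOME y. y \<in> (+) x ` L)"

definition reps :: "'g set" where
  "reps = range rep"

definition chars :: "('g \<Rightarrow> 'a::field) set" where
  "chars = {\<chi>. is_char \<chi> \<and> (\<forall>l\<in>L. \<chi> l = 1)}"

lemma coset_eq_iff: "(+) x ` L = (+) y ` L \<longleftrightarrow> x - y \<in> L"
proof
  assume "(+) x ` L = (+) y ` L"
  moreover have "y \<in> (+) y ` L"
    using add_subgroup_zero[OF add_subgroup] by force
  ultimately obtain l where "l \<in> L" "y = x + l"
    by auto
  then show "x - y \<in> L"
    using add_subgroup_uminus_iff[OF add_subgroup, of l] by simp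
next
  have sub: "(+) u ` L \<subseteq> (+) v ` L" if "u - v \<in> L" for u v
  proof
    fix z assume "z \<in> (+) u ` L"
    then obtain l where "l \<in> L" "z = v + ((u - v) + l)"
      by auto
    then show "z \<in> (+) v ` L"
      using add_subgroup_add[OF add_subgroup that] by blast
  qed
  assume "x - y \<in> L"
  moreover have "y - x \<in> L"
    using \<open>x - y \<in> L\<close> add_subgroup_uminus_iff[OF add_subgroup, of "x - y"] by simp
  ultimately show "(+) x ` L = (+) y ` L"
    using sub by blast
qed

lemma rep_diff: "rep x - x \<in> L"
proof -
  have "x \<in> (+) x ` L"
    using add_subgroup_zero[OF add_subgroup] by force
  then have "rep x \<in> (+) x ` L"
    unfolding rep_def by (rule someI)
  then show ?thesis
    by auto
qed

lemma rep_eq_iff: "rep x = rep y \<longleftrightarrow> x - y \<in> L"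
proof
  assume "rep x = rep y"
  then have "x - y = (rep y - y) - (rep x - x)"
    by (simp add: algebra_simps)
  moreover have "(rep y - y) - (rep x - x) \<in> L"
    by (rule add_subgroup_diff[OF add_subgroup rep_diff rep_diff])
  ultimately show "x - y \<in> L"
    by simp
next
  assume "x - y \<in> L"
  then have "(+) x ` L = (+) y ` L"
    by (simp add: coset_eq_iff)
  then show "rep x = rep y"
    unfolding rep_def by simp
qed

lemma rep_in_reps: "rep x \<in> reps"
  by (simp add: reps_def)

lemma rep_reps: "r \<in> reps \<Longrightarrow> rep r = r"
  unfolding reps_def using rep_eq_iff rep_diff by force

lemma rep_periodic:
  assumes "\<forall>x. \<forall>l\<in>L. \<phi> (x + l) = \<phi> x"
  shows "\<phi> (rep x) = \<phi> x"
  using assms rep_diff[of x] by (metis add_diff_cancel_left'[of x] add.commute diff_add_cancel)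

lemma reps_image_cosets: "reps = (\<lambda>C. SOME y. y \<in> C) ` ((\<lambda>x. (+) x ` L) ` UNIV)"
  unfolding reps_def rep_def by (simp add: image_image)

lemma finite_reps: "finite reps"
  unfolding reps_image_cosets using finite_cosets by simp

lemma card_reps: "card reps = subgroup_index L"
proof -
  have "inj_on (\<lambda>C. SOME y. y \<in> C) ((\<lambda>x. (+) x ` L) ` UNIV)"
  proof (rule inj_onI, clarify)
    fix x y assume "(SOME z. z \<in> (+) x ` L) = (SOME z. z \<in> (+) y ` L)"
    then have "rep x = rep y"
      unfolding rep_def .
    then show "(+) x ` L = (+) y ` L"
      by (simp add: rep_eq_iff coset_eq_iff)
  qed
  then show ?thesis
    unfolding reps_image_cosets subgroup_index_def by (rule card_image)
qed

lemma subgroup_index_pos: "0 < subgroup_index L"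
  using finite_reps rep_in_reps by (auto simp flip: card_reps simp: card_gt_0_iff)

lemma bij_betw_shift_reps: "bij_betw (\<lambda>r. rep (r + y)) reps reps"
proof -
  have "inj_on (\<lambda>r. rep (r + y)) reps"
    by (intro inj_onI) (metis rep_eq_iff rep_reps add_diff_cancel_right)
  then show ?thesis
    by (intro bij_betw_imageI endo_inj_surj[OF finite_reps]) (auto simp: rep_in_reps)
qed

lemma sum_reps_shift:
  assumes "\<forall>x. \<forall>l\<in>L. \<phi> (x + l) = \<phi> x"
  shows "(\<Sum>r\<in>reps. \<phi> (r + y)) = (\<Sum>r\<in>reps. \<phi> r)"
  using sum.reindex_bij_betw[OF bij_betw_shift_reps, of \<phi>] rep_periodic[OF assms] by simp

text \<open>The sum of all representatives is invariant under translation by \<open>y\<close>, up to \<open>L\<close>.\<close>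
lemma nsmul_index_in: "nsmul (subgroup_index L) y \<in> L"
proof -
  have "(\<Sum>r\<in>reps. rep (r + y) - (r + y)) \<in> L"
    by (rule add_subgroup_sum[OF add_subgroup rep_diff])
  also have "(\<Sum>r\<in>reps. rep (r + y) - (r + y)) = - nsmul (subgroup_index L) y"
    using sum.reindex_bij_betw[OF bij_betw_shift_reps, of id y]
    by (simp add: sum_subtractf sum.distrib sum_constant_nsmul finite_reps card_reps)
  finally show ?thesis
    using add_subgroup_uminus_iff[OF add_subgroup] by blast
qed

lemma chars_periodic: "\<chi> \<in> chars \<Longrightarrow> \<forall>x. \<forall>l\<in>L. \<chi> (x + l) = \<chi> x"
  by (simp add: chars_def is_char_add)

lemma chars_power_index: "\<chi> \<in> chars \<Longrightarrow> \<chi> x ^ subgroup_index L = 1"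
  using nsmul_index_in[of x] by (simp add: chars_def flip: is_char_nsmul)

lemma one_in_chars: "(\<lambda>_. 1) \<in> chars"
  by (simp add: chars_def is_char_def)

lemma mult_in_chars: "\<chi> \<in> chars \<Longrightarrow> \<psi> \<in> chars \<Longrightarrow> (\<lambda>x. \<chi> x * \<psi> x) \<in> chars"
  by (simp add: chars_def is_char_def mult_ac)

text \<open>A character in \<open>chars\<close> is determined by its values on \<open>reps\<close>, which are roots of unity.\<close>
lemma finite_chars: "finite (chars :: ('g \<Rightarrow> 'a::field) set)"
proof -
  let ?roots = "{z::'a. z ^ subgroup_index L = 1}"
  have "inj_on (\<lambda>\<chi>. restrict \<chi> reps) (chars :: ('g \<Rightarrow> 'a) set)"
  proof (rule inj_onI, rule ext)
    fix \<chi> \<psi> :: "'g \<Rightarrow> 'a" and x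
    assume "\<chi> \<in> chars" "\<psi> \<in> chars" "restrict \<chi> reps = restrict \<psi> reps"
    then show "\<chi> x = \<psi> x"
      using rep_periodic[OF chars_periodic] rep_in_reps by (metis restrict_apply')
  qed
  moreover have "(\<lambda>\<chi>. restrict \<chi> reps) ` (chars :: ('g \<Rightarrow> 'a) set) \<subseteq> PiE reps (\<lambda>_. ?roots)"
    using chars_power_index by auto
  moreover have "finite (PiE reps (\<lambda>_. ?roots))"
    by (intro finite_PiE finite_reps finite_power_eq_const subgroup_index_pos)
  ultimately show ?thesis
    using finite_imageD finite_subset by blast
qed

lemma sum_reps_char:
  assumes "\<chi> \<in> chars"
  shows "(\<Sum>r\<in>reps. \<chi> r) = (if \<chi> = (\<lambda>_. 1) then of_nat (subgroup_index L) else 0)"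
proof (cases "\<chi> = (\<lambda>_. 1)")
  case True
  then show ?thesis
    by (simp add: card_reps)
next
  case False
  then obtain y where y: "\<chi> y \<noteq> 1"
    by auto
  have "(\<Sum>r\<in>reps. \<chi> r) = (\<Sum>r\<in>reps. \<chi> (r + y))"
    using sum_reps_shift[OF chars_periodic[OF assms]] by simp
  also have "\<dots> = (\<Sum>r\<in>reps. \<chi> r) * \<chi> y"
    using assms by (simp add: chars_def is_char_add sum_distrib_right)
  finally have "(\<Sum>r\<in>reps. \<chi> r) * (\<chi> y - 1) = 0"
    by (simp add: algebra_simps)
  with y False show ?thesis
    by simp
qed

lemma extend_to_chars:
  fixes \<chi> :: "'g \<Rightarrow> 'a::alg_closed_field"
  assumes "add_subgroup H" "L \<subseteq> H" "char_on H \<chi>" "\<forall>l\<in>L. \<chi> l = 1"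
  obtains \<psi> where "\<psi> \<in> chars" "\<forall>x\<in>H. \<psi> x = \<chi> x"
proof -
  have "\<exists>d>0. nsmul d g \<in> H" for g
    using subgroup_index_pos nsmul_index_in assms(2) by blast
  then obtain H' \<psi> where H': "add_subgroup H'" "H \<union> reps \<subseteq> H'" "char_on H' \<psi>" "\<forall>x\<in>H. \<psi> x = \<chi> x"
    by (rule char_on_extend_finite[OF finite_reps assms(1,3)])
  have "x \<in> H'" for x
  proof -
    have "rep x - (rep x - x) \<in> H'"
      using H'(1,2) assms(2) rep_in_reps rep_diff by (blast intro: add_subgroup_diff)
    then show ?thesis
      by simp
  qed
  then have "\<psi> \<in> chars"
    using H'(3,4) assms(2,4) unfolding chars_def is_char_iff_char_on_UNIV char_on_def by auto
  with H'(4) that show ?thesis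
    by blast
qed

lemma chars_separate:
  assumes "coprime (subgroup_index L) CHAR('a::alg_closed_field)" "y \<notin> L"
  obtains \<chi> where "\<chi> \<in> chars" "\<chi> y \<noteq> (1::'a)"
proof -
  define d where "d = order_modulo L y"
  have y: "\<exists>d>0. nsmul d y \<in> L"
    using subgroup_index_pos nsmul_index_in by blast
  have "d dvd subgroup_index L"
    unfolding d_def by (rule order_modulo_dvd[OF add_subgroup y nsmul_index_in])
  then have "of_nat d \<noteq> (0::'a)"
    by (rule of_nat_ne_0_if_dvd_coprime_CHAR[OF assms(1)])
  moreover have "d \<noteq> 1"
    using order_modulo(2)[OF y] assms(2) by (auto simp: d_def nsmul_def)
  then have "2 \<le> d"
    using order_modulo(1)[OF y] unfolding d_def by linarith
  ultimately obtain \<zeta> :: 'a where \<zeta>: "\<zeta> ^ d = 1" "\<zeta> \<noteq> 1"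
    using exists_root_of_unity_ne_1 by blast
  have "char_on L (\<lambda>_. 1 :: 'a)"
    by (simp add: char_on_def)
  then obtain H \<chi> where H: "add_subgroup H" "insert y L \<subseteq> H" "char_on H \<chi>" "\<forall>l\<in>L. \<chi> l = 1" "\<chi> y = \<zeta>"
    using \<zeta>(1) unfolding d_def by (rule char_on_extend[OF add_subgroup _ y]) auto
  then obtain \<psi> where "\<psi> \<in> chars" "\<forall>x\<in>H. \<psi> x = \<chi> x"
    by (elim extend_to_chars) auto
  with H(2,5) \<zeta>(2) that show ?thesis
    by auto
qed

lemma sum_chars_card:
  assumes "coprime (subgroup_index L) CHAR('a::alg_closed_field)"
  shows "(\<Sum>\<chi>\<in>(chars :: ('g \<Rightarrow> 'a) set). \<chi> y) = (if y \<in> L then of_nat (card (chars :: ('g \<Rightarrow> 'a) set)) else 0)"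
proof (cases "y \<in> L")
  case True
  then show ?thesis
    by (simp add: chars_def)
next
  case False
  then obtain \<chi>0 :: "'g \<Rightarrow> 'a" where \<chi>0: "\<chi>0 \<in> chars" "\<chi>0 y \<noteq> 1"
    using chars_separate[OF assms] by blast
  have "inj_on (\<lambda>\<chi> x. \<chi>0 x * \<chi> x) (chars :: ('g \<Rightarrow> 'a) set)"
    using \<chi>0(1) by (intro inj_onI) (auto simp: fun_eq_iff chars_def is_char_nonzero)
  then have "bij_betw (\<lambda>\<chi> x. \<chi>0 x * \<chi> x) chars chars"
    using mult_in_chars[OF \<chi>0(1)] by (intro bij_betw_imageI endo_inj_surj finite_chars) auto
  then have "(\<Sum>\<chi>\<in>(chars :: ('g \<Rightarrow> 'a) set). \<chi> y) = (\<Sum>\<chi>\<in>chars. \<chi>0 y * \<chi> y)"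
    using sum.reindex_bij_betw[of _ chars chars "\<lambda>\<chi>. \<chi> y"] by fastforce
  also have "\<dots> = \<chi>0 y * (\<Sum>\<chi>\<in>chars. \<chi> y)"
    by (simp add: sum_distrib_left)
  finally have sum_eq: "\<chi>0 y * (\<Sum>\<chi>\<in>(chars :: ('g \<Rightarrow> 'a) set). \<chi> y) = (\<Sum>\<chi>\<in>chars. \<chi> y)" ..
  have "(\<chi>0 y - 1) * (\<Sum>\<chi>\<in>(chars :: ('g \<Rightarrow> 'a) set). \<chi> y) = 0"
    unfolding left_diff_distrib sum_eq by simp
  with False \<chi>0(2) show ?thesis
    by simp
qed

text \<open>Double counting \<open>\<Sum>\<chi> \<Sum>r. \<chi> r\<close>.\<close>
lemma of_nat_card_chars:
  assumes "coprime (subgroup_index L) CHAR('a::alg_closed_field)"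
  shows "of_nat (card (chars :: ('g \<Rightarrow> 'a) set)) = (of_nat (subgroup_index L) :: 'a)"
proof -
  have "(\<Sum>\<chi>\<in>(chars :: ('g \<Rightarrow> 'a) set). \<Sum>r\<in>reps. \<chi> r)
      = (\<Sum>\<chi>\<in>(chars :: ('g \<Rightarrow> 'a) set). if \<chi> = (\<lambda>_. 1) then of_nat (subgroup_index L) else 0)"
    by (intro sum.cong) (simp_all add: sum_reps_char)
  also have "\<dots> = of_nat (subgroup_index L)"
    by (subst sum.delta[OF finite_chars]) (simp add: one_in_chars)
  finally have "(\<Sum>\<chi>\<in>(chars :: ('g \<Rightarrow> 'a) set). \<Sum>r\<in>reps. \<chi> r) = of_nat (subgroup_index L)" .
  moreover have "(\<Sum>\<chi>\<in>(chars :: ('g \<Rightarrow> 'a) set). \<Sum>r\<in>reps. \<chi> r) = of_nat (card (chars :: ('g \<Rightarrow> 'a) set))"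
  proof -
    have "r \<in> L \<longleftrightarrow> r = rep 0" if "r \<in> reps" for r
      using rep_reps[OF that] rep_eq_iff[of r 0] by auto
    then have "(\<Sum>r\<in>reps. \<Sum>\<chi>\<in>(chars :: ('g \<Rightarrow> 'a) set). \<chi> r)
        = (\<Sum>r\<in>reps. if r = rep 0 then of_nat (card (chars :: ('g \<Rightarrow> 'a) set)) else 0)"
      by (intro sum.cong) (simp_all add: sum_chars_card[OF assms])
    also have "\<dots> = of_nat (card (chars :: ('g \<Rightarrow> 'a) set))"
      using finite_reps rep_in_reps by (simp add: sum.delta)
    finally show ?thesis
      by (subst sum.swap)
  qed
  ultimately show ?thesis
    by simp
qed

lemma sum_chars:
  assumes "coprime (subgroup_index L) CHAR('a::alg_closed_field)"
  shows "(\<Sum>\<chi>\<in>(chars :: ('g \<Rightarrow> 'a) set). \<chi> y) = (if y \<in> L then of_nat (subgroup_index L) else 0)"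
  using sum_chars_card[OF assms] of_nat_card_chars[OF assms] by simp

lemma fourier_inversion:
  fixes F :: "'g \<Rightarrow> 'a::alg_closed_field"
  assumes "coprime (subgroup_index L) CHAR('a)" and periodic: "\<forall>x. \<forall>l\<in>L. F (x + l) = F x"
  shows "F x = inverse (of_nat (subgroup_index L)) * (\<Sum>r\<in>reps. F r * (\<Sum>\<chi>\<in>chars. \<chi> (x - r)))"
proof -
  have "x - r \<in> L \<longleftrightarrow> r = rep x" if "r \<in> reps" for r
    using rep_eq_iff[of x r] rep_reps[OF that] by auto
  then have "(\<Sum>r\<in>reps. F r * (\<Sum>\<chi>\<in>chars. \<chi> (x - r)))
      = (\<Sum>r\<in>reps. if r = rep x then F r * of_nat (subgroup_index L) else 0)"
    by (intro sum.cong) (simp_all add: sum_chars[OF assms(1)])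
  also have "\<dots> = F (rep x) * of_nat (subgroup_index L)"
    using finite_reps rep_in_reps by (simp add: sum.delta)
  finally have "(\<Sum>r\<in>reps. F r * (\<Sum>\<chi>\<in>chars. \<chi> (x - r))) = F (rep x) * of_nat (subgroup_index L)" .
  moreover have "of_nat (subgroup_index L) \<noteq> (0::'a)"
    using of_nat_ne_0_if_dvd_coprime_CHAR[OF assms(1) dvd_refl] .
  ultimately show ?thesis
    using rep_periodic[OF periodic] by simp
qed

end

section \<open>Convolution with characters\<close>

lemma conv_eq_sum:
  fixes b :: "'g::ab_group_add \<Rightarrow> 'r::comm_ring_1"
  assumes "finite S" "{k. b k \<noteq> 0} \<subseteq> S"
  shows "conv \<phi> b x = (\<Sum>k\<in>S. \<phi> (x - k) * b k)"
proof -
  have "conv \<phi> b x = Sum_any (\<lambda>k. \<phi> (x - k) * b k)"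
    unfolding conv_def
    by (rule Sum_any.reindex_cong[of "\<lambda>k. x - k"]) (auto simp: bij_def inj_def surj_def fun_eq_iff
        intro: exI[of _ "x - _"])
  also have "\<dots> = (\<Sum>k\<in>S. \<phi> (x - k) * b k)"
    using assms by (intro Sum_any.expand_superset) auto
  finally show ?thesis .
qed

definition fourier_transform :: "('g::ab_group_add \<Rightarrow> 'a::field) \<Rightarrow> ('g \<Rightarrow> 'a) \<Rightarrow> 'a" where
  "fourier_transform b \<chi> = (\<Sum>k\<in>{k. b k \<noteq> 0}. b k * \<chi> (- k))"

lemma conv_char:
  assumes "is_char \<chi>" "finite {k. b k \<noteq> 0}"
  shows "conv \<chi> b x = \<chi> x * fourier_transform b \<chi>"
  unfolding conv_eq_sum[OF assms(2) subset_refl] fourier_transform_def sum_distrib_left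
  using is_char_add[OF assms(1), of x "- _"] by (simp add: mult_ac)

lemma harmonic_iff_fourier_transform:
  assumes "is_char \<chi>" "\<forall>j<t. finite {k. a j k \<noteq> 0}"
  shows "harmonic t a \<chi> \<longleftrightarrow> (\<forall>j<t. fourier_transform (to_ac \<circ> a j) \<chi> = 0)"
proof -
  have "finite {k. (to_ac \<circ> a j) k \<noteq> 0}" if "j < t" for j
    using assms(2) that by simp
  then show ?thesis
    unfolding harmonic_def fun_eq_iff
    using conv_char[OF assms(1)] is_char_nonzero[OF assms(1)] by (metis mult_eq_0_iff)
qed

lemma to_ac_conv:
  assumes "finite {k. b k \<noteq> 0}"
  shows "to_ac (conv f b x) = conv (to_ac \<circ> f) (to_ac \<circ> b) x"
  using assms by (simp add: conv_eq_sum[OF assms subset_refl] conv_eq_sum[of "{k. b k \<noteq> 0}"] to_ac_sum)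

lemma conv_frob:
  fixes \<chi> :: "'g::ab_group_add \<Rightarrow> 'k::{field,finite} alg_closure"
  assumes "finite {k. b k \<noteq> 0}"
  shows "conv (frob i \<chi>) (to_ac \<circ> b) x = conv \<chi> (to_ac \<circ> b) x ^ (CARD('k) ^ i)"
proof -
  have supp: "{k. (to_ac \<circ> b) k \<noteq> 0} \<subseteq> {k. b k \<noteq> 0}"
    by auto
  have "conv \<chi> (to_ac \<circ> b) x ^ (CARD('k) ^ i)
      = (\<Sum>k | b k \<noteq> 0. (\<chi> (x - k) * (to_ac \<circ> b) k) ^ (CARD('k) ^ i))"
    unfolding conv_eq_sum[OF assms supp] by (rule card_power_power_sum[OF CHAR_alg_closure])
  then show ?thesis
    unfolding conv_eq_sum[OF assms supp] by (simp add: frob_def power_mult_distrib to_ac_power_card_power)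
qed

lemma harmonic_frob:
  fixes \<chi> :: "'g::ab_group_add \<Rightarrow> 'k::{field,finite} alg_closure"
  assumes "\<forall>j<t. finite {k. a j k \<noteq> 0}" "harmonic t a \<chi>"
  shows "harmonic t a (frob i \<chi>)"
  unfolding harmonic_def
proof (intro allI impI ext)
  fix j x assume "j < t"
  then show "conv (frob i \<chi>) (to_ac \<circ> a j) x = 0"
    using assms conv_frob[of "a j" i \<chi> x] unfolding harmonic_def by (simp add: power_0_left)
qed

lemma conv_translate: "conv (translate f g) b x = conv f b (x + g)"
  unfolding conv_def translate_def
  by (rule Sum_any.reindex_cong[of "\<lambda>h. h - g"]) (auto simp: bij_def inj_def surj_def fun_eq_iff algebra_simps
      intro: exI[of _ "_ + g"])

lemma conv_sum:
  assumes "finite {k. b k \<noteq> 0}"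
  shows "conv (\<lambda>y. \<Sum>i\<in>I. f i y) b x = (\<Sum>i\<in>I. conv (f i) b x)"
  unfolding conv_eq_sum[OF assms subset_refl] sum_distrib_right by (rule sum.swap)

lemma sum_fun_apply: "(\<Sum>i\<in>A. f i) x = (\<Sum>i\<in>A. f i x)"
  by (induction A rule: infinite_finite_induct) auto

interpretation function_module: Modules.module "\<lambda>(c::'k::field) (f::'g \<Rightarrow> 'k) x. c * f x"
  by unfold_locales (auto simp: fun_eq_iff algebra_simps)

lemma subspace_periodic_kernel:
  fixes a :: "nat \<Rightarrow> 'g::ab_group_add \<Rightarrow> 'k::field"
  assumes "\<forall>j<t. finite {x. a j x \<noteq> 0}"
  shows "function_module.subspace {f. (\<forall>x. \<forall>l\<in>L. f (x + l) = f x) \<and> (\<forall>j<t. conv f (a j) = (\<lambda>_. 0))}"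
proof -
  have conv: "conv f (a j) x = (\<Sum>k | a j k \<noteq> 0. f (x - k) * a j k)" if "j < t" for f j x
    using assms that by (intro conv_eq_sum) auto
  show ?thesis
    unfolding function_module.subspace_def
    by (auto simp: conv fun_eq_iff sum.distrib distrib_right mult.assoc simp flip: sum_distrib_left)
qed

section \<open>The kernel of convolution on periodic functions\<close>

context finite_index_subgroup
begin

lemma frob_in_chars: "\<chi> \<in> chars \<Longrightarrow> frob i \<chi> \<in> chars"
  unfolding chars_def is_char_def frob_def by (auto simp: power_mult_distrib)

lemma chars_frob_periodic:
  fixes \<chi> :: "'g \<Rightarrow> 'k::{field,finite} alg_closure"
  assumes "\<chi> \<in> chars"
  shows "\<exists>s>0. frob s \<chi> = \<chi>"
proof -
  have "range (\<lambda>i. frob i \<chi>) \<subseteq> chars"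
    using frob_in_chars[OF assms] by auto
  then have "finite (range (\<lambda>i. frob i \<chi>))"
    using finite_chars finite_subset by blast
  then have "\<not> inj (\<lambda>i. frob i \<chi>)"
    using finite_imageD infinite_UNIV_nat by blast
  then obtain i j where "i < j" "frob i \<chi> = frob j \<chi>"
    unfolding inj_def by (metis linorder_neqE_nat)
  then show ?thesis
    using frob_diff_period by (intro exI[of _ "j - i"]) auto
qed

lemma sum_reps_char_diff:
  assumes "\<chi> \<in> chars"
  shows "(\<Sum>r\<in>reps. F r * \<chi> (x - r)) = \<chi> x * (\<Sum>r\<in>reps. F r * \<chi> (- r))"
proof -
  have "\<chi> (x - r) = \<chi> x * \<chi> (- r)" for r
    using is_char_add[of \<chi> x "- r"] assms by (simp add: chars_def)
  then show ?thesis
    by (simp add: sum_distrib_left mult.left_commute)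
qed

lemma fourier_conv:
  fixes F b :: "'g \<Rightarrow> 'a::field"
  assumes periodic: "\<forall>x. \<forall>l\<in>L. F (x + l) = F x" and b: "finite {k. b k \<noteq> 0}" and \<chi>: "\<chi> \<in> chars"
  shows "(\<Sum>x\<in>reps. conv F b x * \<chi> (- x)) = (\<Sum>r\<in>reps. F r * \<chi> (- r)) * fourier_transform b \<chi>"
proof -
  define \<phi> where "\<phi> y = F y * \<chi> (- y)" for y
  have "\<chi> (- (x + l)) = \<chi> (- x)" if "l \<in> L" for x l
    using chars_periodic[OF \<chi>] add_subgroup_uminus_iff[OF add_subgroup, of l] that
    by (metis minus_add_distrib)
  then have \<phi>_periodic: "\<forall>x. \<forall>l\<in>L. \<phi> (x + l) = \<phi> x"
    using periodic by (simp add: \<phi>_def)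
  have shift: "(\<Sum>x\<in>reps. F (x - k) * \<chi> (- x)) = (\<Sum>r\<in>reps. \<phi> r) * \<chi> (- k)" for k
  proof -
    have "F (x - k) * \<chi> (- x) = \<phi> (x + - k) * \<chi> (- k)" for x
      using is_char_add[of \<chi> "k - x" "- k"] \<chi> by (simp add: \<phi>_def chars_def)
    then have "(\<Sum>x\<in>reps. F (x - k) * \<chi> (- x)) = (\<Sum>x\<in>reps. \<phi> (x + - k)) * \<chi> (- k)"
      by (simp add: sum_distrib_right)
    then show ?thesis
      using sum_reps_shift[OF \<phi>_periodic, of "- k"] by simp
  qed
  have "(\<Sum>x\<in>reps. conv F b x * \<chi> (- x)) = (\<Sum>k | b k \<noteq> 0. b k * (\<Sum>x\<in>reps. F (x - k) * \<chi> (- x)))"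
    unfolding conv_eq_sum[OF b subset_refl] sum_distrib_right sum_distrib_left
    by (subst sum.swap) (simp add: mult_ac)
  also have "\<dots> = (\<Sum>r\<in>reps. \<phi> r) * fourier_transform b \<chi>"
    unfolding shift fourier_transform_def by (simp add: sum_distrib_left mult_ac)
  finally show ?thesis
    unfolding \<phi>_def .
qed

lemma translate_TrK_in_periodic_kernel:
  fixes \<chi> :: "'g \<Rightarrow> 'k::{field,finite} alg_closure"
  assumes \<chi>: "\<chi> \<in> chars" "harmonic t a \<chi>" and fin: "\<forall>j<t. finite {x. a j x \<noteq> 0}"
  shows "translate (TrK \<chi>) g \<in> {f. (\<forall>x. \<forall>l\<in>L. f (x + l) = f x) \<and> (\<forall>j<t. conv f (a j) = (\<lambda>_. 0))}"
proof (intro CollectI conjI allI ballI impI ext)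
  fix x l assume "l \<in> L"
  then have "\<chi> (x + g + l) = \<chi> (x + g)"
    using chars_periodic[OF \<chi>(1)] by blast
  then show "translate (TrK \<chi>) g (x + l) = translate (TrK \<chi>) g x"
    by (simp add: translate_def TrK_def Tr_def add.commute add.left_commute)
next
  have periodic: "\<exists>s>0. frob s \<chi> = \<chi>"
    by (rule chars_frob_periodic[OF \<chi>(1)])
  fix j x assume "j < t"
  then have supp: "finite {k. a j k \<noteq> 0}"
    using fin by blast
  have "to_ac (conv (translate (TrK \<chi>) g) (a j) x) = conv (Tr \<chi>) (to_ac \<circ> a j) (x + g)"
    unfolding to_ac_conv[OF supp] conv_translate[symmetric]
    by (simp add: comp_def translate_def to_ac_TrK[OF periodic])
  also have "\<dots> = (\<Sum>i<frob_period \<chi>. conv (frob i \<chi>) (to_ac \<circ> a j) (x + g))"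
    unfolding Tr_eq_sum_frob[OF periodic, abs_def] using supp by (intro conv_sum) simp
  also have "\<dots> = 0"
    using harmonic_frob[OF fin \<chi>(2)] \<open>j < t\<close> unfolding harmonic_def by simp
  finally show "conv (translate (TrK \<chi>) g) (a j) x = 0"
    by simp
qed

lemma fourier_coeff_nonharmonic:
  fixes f :: "'g \<Rightarrow> 'k::{field,finite}"
  assumes fin: "\<forall>j<t. finite {x. a j x \<noteq> 0}"
    and periodic: "\<forall>x. \<forall>l\<in>L. f (x + l) = f x" and kernel: "\<forall>j<t. conv f (a j) = (\<lambda>_. 0)"
    and \<chi>: "\<chi> \<in> chars" "\<not> harmonic t a \<chi>"
  shows "(\<Sum>r\<in>reps. to_ac (f r) * \<chi> (- r)) = 0"
proof -
  obtain j where j: "j < t" "fourier_transform (to_ac \<circ> a j) \<chi> \<noteq> 0"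
    using \<chi> harmonic_iff_fourier_transform[OF _ fin] by (auto simp: chars_def)
  then have supp: "finite {k. (to_ac \<circ> a j) k \<noteq> 0}"
    using fin by simp
  have "(\<Sum>x\<in>reps. conv (to_ac \<circ> f) (to_ac \<circ> a j) x * \<chi> (- x))
      = (\<Sum>r\<in>reps. (to_ac \<circ> f) r * \<chi> (- r)) * fourier_transform (to_ac \<circ> a j) \<chi>"
    using periodic by (intro fourier_conv[OF _ supp \<chi>(1)]) simp
  moreover have "conv (to_ac \<circ> f) (to_ac \<circ> a j) x = 0" for x
    using to_ac_conv[of "a j" f x] fin j(1) kernel by simp
  ultimately show ?thesis
    using j(2) by simp
qed

lemma periodic_kernel_expansion:
  fixes f :: "'g \<Rightarrow> 'k::{field,finite}"
  assumes "coprime (subgroup_index L) CHAR('k)" and fin: "\<forall>j<t. finite {x. a j x \<noteq> 0}"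
    and periodic: "\<forall>x. \<forall>l\<in>L. f (x + l) = f x" and kernel: "\<forall>j<t. conv f (a j) = (\<lambda>_. 0)"
  shows "to_ac (f x) = inverse (of_nat (subgroup_index L))
    * (\<Sum>r\<in>reps. to_ac (f r) * (\<Sum>\<chi>\<in>{\<chi> \<in> chars. harmonic t a \<chi>}. \<chi> (x - r)))"
proof -
  let ?F = "\<lambda>x. to_ac (f x)" and ?H = "{\<chi> \<in> chars. harmonic t a \<chi>}"
  have swap: "(\<Sum>r\<in>reps. ?F r * (\<Sum>\<chi>\<in>A. \<chi> (x - r))) = (\<Sum>\<chi>\<in>A. \<chi> x * (\<Sum>r\<in>reps. ?F r * \<chi> (- r)))"
    if "A \<subseteq> chars" for A
  proof -
    have "(\<Sum>r\<in>reps. ?F r * (\<Sum>\<chi>\<in>A. \<chi> (x - r))) = (\<Sum>\<chi>\<in>A. \<Sum>r\<in>reps. ?F r * \<chi> (x - r))"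
      unfolding sum_distrib_left by (rule sum.swap)
    also have "\<dots> = (\<Sum>\<chi>\<in>A. \<chi> x * (\<Sum>r\<in>reps. ?F r * \<chi> (- r)))"
      using that by (intro sum.cong refl sum_reps_char_diff) blast
    finally show ?thesis .
  qed
  have "(\<Sum>r\<in>reps. ?F r * (\<Sum>\<chi>\<in>chars. \<chi> (x - r))) = (\<Sum>\<chi>\<in>chars. \<chi> x * (\<Sum>r\<in>reps. ?F r * \<chi> (- r)))"
    by (rule swap) simp
  also have "\<dots> = (\<Sum>\<chi>\<in>?H. \<chi> x * (\<Sum>r\<in>reps. ?F r * \<chi> (- r)))"
    using fourier_coeff_nonharmonic[OF fin periodic kernel]
    by (intro sum.mono_neutral_right finite_chars) auto
  also have "\<dots> = (\<Sum>r\<in>reps. ?F r * (\<Sum>\<chi>\<in>?H. \<chi> (x - r)))"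
    by (rule swap[symmetric]) blast
  finally show ?thesis
    using fourier_inversion[of ?F x] assms(1) periodic by simp
qed

lemma periodic_kernel_subset_span:
  fixes f :: "'g \<Rightarrow> 'k::{field,finite}"
  assumes cop: "coprime (subgroup_index L) CHAR('k)" and fin: "\<forall>j<t. finite {x. a j x \<noteq> 0}"
    and periodic: "\<forall>x. \<forall>l\<in>L. f (x + l) = f x" and kernel: "\<forall>j<t. conv f (a j) = (\<lambda>_. 0)"
  shows "f \<in> fspan {translate (TrK \<chi>) g | \<chi> g. is_char \<chi> \<and> harmonic t a \<chi> \<and> (\<forall>l\<in>L. \<chi> l = 1)}"
proof -
  define H where "H = {\<chi> \<in> (chars :: ('g \<Rightarrow> 'k alg_closure) set). harmonic t a \<chi>}"
  define c where "c r = inverse (of_nat (subgroup_index L)) * f r" for r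
  have H_periodic: "\<And>\<chi>. \<chi> \<in> H \<Longrightarrow> \<exists>s>0. frob s \<chi> = \<chi>"
    unfolding H_def using chars_frob_periodic by blast
  have H_stable: "\<And>\<chi> i. \<chi> \<in> H \<Longrightarrow> frob i \<chi> \<in> H"
    unfolding H_def using frob_in_chars harmonic_frob[OF fin] by blast
  have "finite H"
    unfolding H_def by (rule finite_subset[OF _ finite_chars]) blast
  have reps_H: "orbit_rep \<rho> \<in> H" if "\<rho> \<in> H" for \<rho>
    using H_stable[OF that] orbit_rep_in_frob_orbit[of \<rho>] unfolding frob_orbit_def by auto
  have "to_ac (f x) = to_ac ((\<Sum>r\<in>reps. \<Sum>\<rho>\<in>orbit_rep ` H. (\<lambda>y. c r * translate (TrK \<rho>) (- r) y)) x)" for x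
  proof -
    have "to_ac (f x) = inverse (of_nat (subgroup_index L)) * (\<Sum>r\<in>reps. to_ac (f r) * (\<Sum>\<chi>\<in>H. \<chi> (x - r)))"
      unfolding H_def by (rule periodic_kernel_expansion[OF cop fin periodic kernel])
    also have "\<dots> = inverse (of_nat (subgroup_index L))
        * (\<Sum>r\<in>reps. to_ac (f r) * (\<Sum>\<rho>\<in>orbit_rep ` H. to_ac (TrK \<rho> (x - r))))"
    proof -
      have "to_ac (TrK \<rho> y) = Tr \<rho> y" if "\<rho> \<in> orbit_rep ` H" for \<rho> y
        using that to_ac_TrK[OF H_periodic[OF reps_H]] by blast
      then have "(\<Sum>\<chi>\<in>H. \<chi> (x - r)) = (\<Sum>\<rho>\<in>orbit_rep ` H. to_ac (TrK \<rho> (x - r)))" for r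
        using sum_frob_stable_eq_sum_Tr[OF \<open>finite H\<close> H_periodic H_stable, of "x - r"] by simp
      then show ?thesis
        by simp
    qed
    also have "\<dots> = to_ac ((\<Sum>r\<in>reps. \<Sum>\<rho>\<in>orbit_rep ` H. (\<lambda>y. c r * translate (TrK \<rho>) (- r) y)) x)"
      unfolding sum_fun_apply to_ac_sum by (simp add: c_def translate_def sum_distrib_left mult.assoc)
    finally show ?thesis .
  qed
  then have "f = (\<Sum>r\<in>reps. \<Sum>\<rho>\<in>orbit_rep ` H. (\<lambda>y. c r * translate (TrK \<rho>) (- r) y))"
    by (simp add: fun_eq_iff)
  also have "\<dots> \<in> fspan {translate (TrK \<chi>) g | \<chi> g. is_char \<chi> \<and> harmonic t a \<chi> \<and> (\<forall>l\<in>L. \<chi> l = 1)}"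
  proof (intro function_module.span_sum function_module.span_scale function_module.span_base)
    fix r \<rho> assume "\<rho> \<in> orbit_rep ` H"
    then have "\<rho> \<in> H"
      using reps_H by blast
    then show "translate (TrK \<rho>) (- r) \<in> {translate (TrK \<chi>) g | \<chi> g. is_char \<chi> \<and> harmonic t a \<chi> \<and> (\<forall>l\<in>L. \<chi> l = 1)}"
      unfolding H_def chars_def by blast
  qed
  finally show ?thesis .
qed

theorem periodic_kernel_eq_span_Tr:
  fixes a :: "nat \<Rightarrow> 'g \<Rightarrow> 'k::{field,finite}"
  assumes "coprime (subgroup_index L) CHAR('k)" "\<forall>j<t. finite {x. a j x \<noteq> 0}"
  shows "{f. (\<forall>x. \<forall>l\<in>L. f (x + l) = f x) \<and> (\<forall>j<t. conv f (a j) = (\<lambda>_. 0))}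
     = fspan {translate (TrK \<chi>) g | \<chi> g. is_char \<chi> \<and> harmonic t a \<chi> \<and> (\<forall>l\<in>L. \<chi> l = 1)}"
proof
  show "fspan {translate (TrK \<chi>) g | \<chi> g. is_char \<chi> \<and> harmonic t a \<chi> \<and> (\<forall>l\<in>L. \<chi> l = 1)}
      \<subseteq> {f. (\<forall>x. \<forall>l\<in>L. f (x + l) = f x) \<and> (\<forall>j<t. conv f (a j) = (\<lambda>_. 0))}"
    using translate_TrK_in_periodic_kernel[OF _ _ assms(2)]
    by (intro function_module.span_minimal subspace_periodic_kernel[OF assms(2)]) (auto simp: chars_def)
  show "{f. (\<forall>x. \<forall>l\<in>L. f (x + l) = f x) \<and> (\<forall>j<t. conv f (a j) = (\<lambda>_. 0))}
      \<subseteq> fspan {translate (TrK \<chi>) g | \<chi> g. is_char \<chi> \<and> harmonic t a \<chi> \<and> (\<forall>l\<in>L. \<chi> l = 1)}"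
    using periodic_kernel_subset_span[OF assms] by blast
qed

end

lemma subgroup_index_zero: "subgroup_index {0::'g::{ab_group_add,finite}} = CARD('g)"
  unfolding subgroup_index_def by (simp add: card_image)

theorem theorem4p4:
  shows
  "(\<forall>(t::nat) (a :: nat \<Rightarrow> 'g::{ab_group_add,finite} \<Rightarrow> 'k).
      coprime CARD('g) CHAR('k::{field,finite}) \<longrightarrow>
      {f :: 'g \<Rightarrow> 'k. \<forall>j<t. conv f (a j) = (\<lambda>_. 0)}
        = fspan {translate (TrK \<chi>) g | \<chi> g. is_char \<chi> \<and> harmonic t a \<chi>})
   \<and>
   (\<forall>(L' :: ('n::finite \<Rightarrow> int) set) (t::nat) (a :: nat \<Rightarrow> ('n \<Rightarrow> int) \<Rightarrow> 'k).
      add_subgroup L' \<and> finite ((\<lambda>x. (+) x ` L') ` UNIV)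
      \<and> coprime (subgroup_index L') CHAR('k::{field,finite})
      \<and> (\<forall>j<t. finite {x. a j x \<noteq> 0}) \<longrightarrow>
      {f :: ('n \<Rightarrow> int) \<Rightarrow> 'k. (\<forall>x. \<forall>l\<in>L'. f (x + l) = f x) \<and> (\<forall>j<t. conv f (a j) = (\<lambda>_. 0))}
        = fspan {translate (TrK \<chi>) g | \<chi> g. is_char \<chi> \<and> harmonic t a \<chi> \<and> (\<forall>l\<in>L'. \<chi> l = 1)})"
proof (intro conjI allI impI)
  fix t :: nat and a :: "nat \<Rightarrow> 'g::{ab_group_add,finite} \<Rightarrow> 'k::{field,finite}"
  assume "coprime CARD('g) CHAR('k)"
  interpret finite_index_subgroup "{0::'g}"
    by unfold_locales (simp_all add: add_subgroup_def)
  have "{f :: 'g \<Rightarrow> 'k. (\<forall>x. \<forall>l\<in>{0}. f (x + l) = f x) \<and> (\<forall>j<t. conv f (a j) = (\<lambda>_. 0))}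
      = fspan {translate (TrK \<chi>) g | \<chi> g. is_char \<chi> \<and> harmonic t a \<chi> \<and> (\<forall>l\<in>{0}. \<chi> l = 1)}"
    using \<open>coprime CARD('g) CHAR('k)\<close> by (intro periodic_kernel_eq_span_Tr) (simp_all add: subgroup_index_zero)
  moreover have "{translate (TrK \<chi>) g | \<chi> g. is_char \<chi> \<and> harmonic t a \<chi> \<and> (\<forall>l\<in>{0}. \<chi> l = 1)}
      = {translate (TrK \<chi>) g | \<chi> g. is_char \<chi> \<and> harmonic t a \<chi>}"
    using is_char_zero by blast
  ultimately show "{f :: 'g \<Rightarrow> 'k. \<forall>j<t. conv f (a j) = (\<lambda>_. 0)}
      = fspan {translate (TrK \<chi>) g | \<chi> g. is_char \<chi> \<and> harmonic t a \<chi>}"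
    by simp
next
  fix L' :: "('n::finite \<Rightarrow> int) set" and t :: nat and a :: "nat \<Rightarrow> ('n \<Rightarrow> int) \<Rightarrow> 'k::{field,finite}"
  assume L': "add_subgroup L' \<and> finite ((\<lambda>x. (+) x ` L') ` UNIV)
      \<and> coprime (subgroup_index L') CHAR('k) \<and> (\<forall>j<t. finite {x. a j x \<noteq> 0})"
  then interpret finite_index_subgroup L'
    by unfold_locales simp_all
  show "{f :: ('n \<Rightarrow> int) \<Rightarrow> 'k. (\<forall>x. \<forall>l\<in>L'. f (x + l) = f x) \<and> (\<forall>j<t. conv f (a j) = (\<lambda>_. 0))}
      = fspan {translate (TrK \<chi>) g | \<chi> g. is_char \<chi> \<and> harmonic t a \<chi> \<and> (\<forall>l\<in>L'. \<chi> l = 1)}"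
    using L' by (intro periodic_kernel_eq_span_Tr) simp_all
qed

end
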